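(* Let $0<\mu<L$, $q=\mu/L$, and define $A_0=0$, $A_{k+1}=\frac{(1+q)A_k+2\big(1+\sqrt{(1+A_k)(1+qA_k)}\big)}{(1-q)^2}$, $\beta_k=\frac{A_k}{(1-q)A_{k+1}}$, $\delta_k=\sqrt{\frac{A_{k+1}}{1+qA_{k+1}}}$ and $\sigma_k=\sqrt{(1+A_k)(1+qA_k)}$. Then, as $k\to\infty$: $A_k\to\infty$; $A_k/A_{k+1}\to(1-\sqrt q)^2$; $\beta_k\to\frac{1-\sqrt q}{1+\sqrt q}$; $\delta_k\to\frac1{\sqrt q}$; $\sigma_k/A_k\to\sqrt q$; and $\sigma_k/A_{k+1}\to\sqrt q(1-\sqrt q)^2$. *)

theory Defs
  imports "HOL-Analysis.Analysis"
begin

fun seqA :: "real \<Rightarrow> nat \<Rightarrow> real" where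
  "seqA q 0 = 0"
| "seqA q (Suc k) =
     ((1 + q) * seqA q k + 2 * (1 + sqrt ((1 + seqA q k) * (1 + q * seqA q k)))) / (1 - q)^2"

definition betaS :: "real \<Rightarrow> nat \<Rightarrow> real" where
  "betaS q k = seqA q k / ((1 - q) * seqA q (Suc k))"

definition deltaS :: "real \<Rightarrow> nat \<Rightarrow> real" where
  "deltaS q k = sqrt (seqA q (Suc k) / (1 + q * seqA q (Suc k)))"

definition sigmaS :: "real \<Rightarrow> nat \<Rightarrow> real" where
  "sigmaS q k = sqrt ((1 + seqA q k) * (1 + q * seqA q k))"

end

theory Submission
  imports Defs
begin

text \<open>The recursion gives \<open>A\<^sub>k\<^sub>+\<^sub>1 \<ge> A\<^sub>k + 2\<close>, so \<open>A\<^sub>k \<rightarrow> \<infinity>\<close> and \<open>\<sigma>\<^sub>k / A\<^sub>k \<rightarrow> \<surd>q\<close>.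
  Dividing the recursion by \<open>A\<^sub>k\<close> then yields
  \<open>A\<^sub>k\<^sub>+\<^sub>1 / A\<^sub>k \<rightarrow> (1 + q + 2\<surd>q) / (1 - q)\<^sup>2 = (1 - \<surd>q)\<^sup>-\<^sup>2\<close>, and every other limit
  follows by limit arithmetic, using \<open>1 - q = (1 - \<surd>q)(1 + \<surd>q)\<close>.\<close>

lemma tendsto_sqrt_product_div_at_top:
  fixes f :: "'a \<Rightarrow> real"
  assumes "filterlim f at_top F" and "0 \<le> q"
  shows "((\<lambda>x. sqrt ((1 + f x) * (1 + q * f x)) / f x) \<longlongrightarrow> sqrt q) F"
proof (rule Lim_transform_eventually)
  have "((\<lambda>x. sqrt ((1 + inverse (f x)) * (q + inverse (f x)))) \<longlongrightarrow> sqrt ((1 + 0) * (q + 0))) F"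
    by (intro tendsto_intros tendsto_inverse_0_at_top assms(1))
  then show "((\<lambda>x. sqrt ((1 + inverse (f x)) * (q + inverse (f x)))) \<longlongrightarrow> sqrt q) F"
    by simp
  have "sqrt ((1 + inverse a) * (q + inverse a)) = sqrt ((1 + a) * (1 + q * a)) / a"
    if "0 < a" for a :: real
  proof -
    have "(1 + inverse a) * (q + inverse a) = (1 + a) * (1 + q * a) / a\<^sup>2"
      using that by (simp add: field_simps power2_eq_square)
    then show ?thesis
      using that by (simp add: real_sqrt_divide)
  qed
  moreover have "\<forall>\<^sub>F x in F. 0 < f x"
    using assms(1) by (simp add: filterlim_at_top_dense)
  ultimately show "\<forall>\<^sub>F x in F. sqrt ((1 + inverse (f x)) * (q + inverse (f x)))
      = sqrt ((1 + f x) * (1 + q * f x)) / f x"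
    by (auto elim: eventually_mono)
qed

lemma tendsto_div_one_plus_mult_at_top:
  fixes f :: "'a \<Rightarrow> real"
  assumes "filterlim f at_top F" and "0 < q"
  shows "((\<lambda>x. f x / (1 + q * f x)) \<longlongrightarrow> 1 / q) F"
proof (rule Lim_transform_eventually)
  show "((\<lambda>x. inverse (inverse (f x) + q)) \<longlongrightarrow> 1 / q) F"
    using tendsto_inverse[OF tendsto_add[OF tendsto_inverse_0_at_top[OF assms(1)] tendsto_const]]
      assms(2) by (simp add: inverse_eq_divide)
  have "\<forall>\<^sub>F x in F. 0 < f x"
    using assms(1) by (simp add: filterlim_at_top_dense)
  then show "\<forall>\<^sub>F x in F. inverse (inverse (f x) + q) = f x / (1 + q * f x)"
    by (rule eventually_mono) (simp add: field_simps)
qed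

declare seqA.simps(2) [simp del]

lemma seqA_nonneg: "0 \<le> q \<Longrightarrow> 0 \<le> seqA q k"
  by (induction k) (simp_all add: seqA.simps)

lemma seqA_Suc_ge:
  assumes "0 \<le> q" and "q < 1"
  shows "seqA q k + 2 \<le> seqA q (Suc k)"
proof -
  let ?A = "seqA q k"
  have d: "0 < (1 - q)\<^sup>2" "(1 - q)\<^sup>2 \<le> 1"
    using assms by (auto simp: power2_eq_square mult_le_one)
  have "(?A + 2) * (1 - q)\<^sup>2 \<le> ?A + 2"
    using d seqA_nonneg[OF assms(1)] by (simp add: mult_left_le)
  also have "\<dots> \<le> (1 + q) * ?A + 2 * (1 + sqrt ((1 + ?A) * (1 + q * ?A)))"
    using assms(1) seqA_nonneg[OF assms(1), of k] by (simp add: algebra_simps)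
  finally show ?thesis
    using d by (simp add: seqA.simps pos_le_divide_eq)
qed

lemma seqA_ge_linear:
  assumes "0 \<le> q" and "q < 1"
  shows "2 * real k \<le> seqA q k"
proof (induction k)
  case (Suc k)
  then show ?case using seqA_Suc_ge[OF assms, of k] by simp
qed simp

lemma filterlim_seqA_at_top:
  assumes "0 \<le> q" and "q < 1"
  shows "filterlim (seqA q) at_top sequentially"
proof (rule filterlim_at_top_mono[OF filterlim_real_sequentially always_eventually], rule allI)
  show "real k \<le> seqA q k" for k
    using seqA_ge_linear[OF assms, of k] by simp
qed

lemma eventually_seqA_nonzero:
  assumes "0 \<le> q" and "q < 1"
  shows "\<forall>\<^sub>F k in sequentially. seqA q k \<noteq> 0"
  using filterlim_seqA_at_top[OF assms] unfolding filterlim_at_top_dense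
  by (auto elim!: allE[of _ 0] eventually_mono)

lemma sigmaS_div_seqA_tendsto:
  assumes "0 \<le> q" and "q < 1"
  shows "(\<lambda>k. sigmaS q k / seqA q k) \<longlonglongrightarrow> sqrt q"
  unfolding sigmaS_def
  by (rule tendsto_sqrt_product_div_at_top[OF filterlim_seqA_at_top[OF assms] assms(1)])

lemma seqA_Suc_div_seqA:
  assumes "seqA q k \<noteq> 0"
  shows "seqA q (Suc k) / seqA q k
    = ((1 + q) + 2 * inverse (seqA q k) + 2 * (sigmaS q k / seqA q k)) / (1 - q)\<^sup>2"
proof -
  have "seqA q (Suc k) = ((1 + q) * seqA q k + 2 * (1 + sigmaS q k)) / (1 - q)\<^sup>2"
    by (simp add: seqA.simps sigmaS_def)
  then show ?thesis
    using assms by (simp add: field_simps)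
qed

lemma seqA_Suc_div_seqA_tendsto:
  assumes "0 \<le> q" and "q < 1"
  shows "(\<lambda>k. seqA q (Suc k) / seqA q k) \<longlonglongrightarrow> (1 + q + 2 * sqrt q) / (1 - q)\<^sup>2"
proof -
  have "\<forall>\<^sub>F k in sequentially. seqA q (Suc k) / seqA q k
      = ((1 + q) + 2 * inverse (seqA q k) + 2 * (sigmaS q k / seqA q k)) / (1 - q)\<^sup>2"
    using eventually_seqA_nonzero[OF assms] by (rule eventually_mono) (rule seqA_Suc_div_seqA)
  moreover have "(\<lambda>k. ((1 + q) + 2 * inverse (seqA q k) + 2 * (sigmaS q k / seqA q k)) / (1 - q)\<^sup>2)
      \<longlonglongrightarrow> ((1 + q) + 2 * 0 + 2 * sqrt q) / (1 - q)\<^sup>2"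
    by (intro tendsto_intros sigmaS_div_seqA_tendsto tendsto_inverse_0_at_top
        filterlim_seqA_at_top assms)
      (use assms(2) in simp)
  ultimately show ?thesis
    by (subst tendsto_cong) simp_all
qed

lemma seqA_div_seqA_Suc_tendsto:
  assumes "0 \<le> q" and "q < 1"
  shows "(\<lambda>k. seqA q k / seqA q (Suc k)) \<longlonglongrightarrow> (1 - sqrt q)\<^sup>2"
proof -
  have "(1 + s * s + 2 * s) * (1 - s)\<^sup>2 = (1 - s * s)\<^sup>2" for s :: real
    by algebra
  from this[of "sqrt q"] have "(1 + q + 2 * sqrt q) / (1 - q)\<^sup>2 = inverse ((1 - sqrt q)\<^sup>2)"
    using assms by (simp add: field_simps)
  with tendsto_inverse[OF seqA_Suc_div_seqA_tendsto[OF assms]] show ?thesis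
    using assms by simp
qed

lemma betaS_tendsto:
  assumes "0 \<le> q" and "q < 1"
  shows "betaS q \<longlonglongrightarrow> (1 - sqrt q) / (1 + sqrt q)"
proof -
  have "(1 - s)\<^sup>2 / (1 - s * s) = (1 - s) / (1 + s)" if "0 \<le> s" "s < 1" for s :: real
  proof -
    have "1 - s * s = (1 - s) * (1 + s)"
      by (simp add: algebra_simps)
    then show ?thesis
      using that by (simp add: power2_eq_square)
  qed
  from this[of "sqrt q"] have "(1 - sqrt q)\<^sup>2 / (1 - q) = (1 - sqrt q) / (1 + sqrt q)"
    using assms by simp
  moreover have "betaS q = (\<lambda>k. (seqA q k / seqA q (Suc k)) / (1 - q))"
    by (auto simp: betaS_def)
  ultimately show ?thesis
    using tendsto_divide[OF seqA_div_seqA_Suc_tendsto[OF assms] tendsto_const, of "1 - q"] assms(2)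
    by simp
qed

lemma deltaS_tendsto:
  assumes "0 < q" and "q < 1"
  shows "deltaS q \<longlonglongrightarrow> 1 / sqrt q"
proof -
  have "filterlim (\<lambda>k. seqA q (Suc k)) at_top sequentially"
    using filterlim_seqA_at_top assms by (simp add: filterlim_sequentially_Suc)
  from tendsto_real_sqrt[OF tendsto_div_one_plus_mult_at_top[OF this assms(1)]]
  show ?thesis
    unfolding deltaS_def by (simp add: real_sqrt_divide)
qed

lemma sigmaS_div_seqA_Suc_tendsto:
  assumes "0 \<le> q" and "q < 1"
  shows "(\<lambda>k. sigmaS q k / seqA q (Suc k)) \<longlonglongrightarrow> sqrt q * (1 - sqrt q)\<^sup>2"
proof (rule Lim_transform_eventually)
  show "(\<lambda>k. (sigmaS q k / seqA q k) * (seqA q k / seqA q (Suc k)))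
      \<longlonglongrightarrow> sqrt q * (1 - sqrt q)\<^sup>2"
    by (intro tendsto_mult sigmaS_div_seqA_tendsto seqA_div_seqA_Suc_tendsto assms)
  show "\<forall>\<^sub>F k in sequentially.
      (sigmaS q k / seqA q k) * (seqA q k / seqA q (Suc k)) = sigmaS q k / seqA q (Suc k)"
    using eventually_seqA_nonzero[OF assms] by (rule eventually_mono) simp
qed

theorem lemma4:
  fixes \<mu> L q :: real
  assumes "0 < \<mu>" and "\<mu> < L" and "q = \<mu> / L"
  shows "filterlim (seqA q) at_top sequentially \<and>
     (\<lambda>k. seqA q k / seqA q (Suc k)) \<longlonglongrightarrow> (1 - sqrt q)^2 \<and>
     betaS q \<longlonglongrightarrow> (1 - sqrt q) / (1 + sqrt q) \<and>
     deltaS q \<longlonglongrightarrow> 1 / sqrt q \<and>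
     (\<lambda>k. sigmaS q k / seqA q k) \<longlonglongrightarrow> sqrt q \<and>
     (\<lambda>k. sigmaS q k / seqA q (Suc k)) \<longlonglongrightarrow> sqrt q * (1 - sqrt q)^2"
proof -
  have "0 < q" and q: "0 \<le> q" "q < 1"
    using assms by (simp_all add: divide_less_eq)
  show ?thesis
    using filterlim_seqA_at_top[OF q] seqA_div_seqA_Suc_tendsto[OF q] betaS_tendsto[OF q]
      deltaS_tendsto[OF \<open>0 < q\<close> q(2)] sigmaS_div_seqA_tendsto[OF q]
      sigmaS_div_seqA_Suc_tendsto[OF q]
    by blast
qed

end
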